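(* Let $a=a_0+a_1e_1+a_2e_2+a_3e_3\in C\ell_2\setminus\mathbb{R}$. Then there exists $u\in C\ell_2\setminus Z(C\ell_2)$ such that $$u^{-1}au=\begin{cases} a_0+\sqrt{G(a)}\,e_2, & G(a)>0;\\ a_0+\sqrt{-G(a)}\,e_3, & G(a)<0;\\ a_0+e_2+e_3, & G(a)=0.\end{cases}$$
   Context: $C\ell_2$ is the 4-dimensional real associative algebra with basis $1,e_1,e_2,e_3$ and multiplication $e_1^2=e_2^2=1$, $e_3^2=-1$, $e_1e_2=e_3=-e_2e_1$, $e_1e_3=e_2=-e_3e_1$, $e_3e_2=e_1=-e_2e_3$; $\mathbb{R}$ is identified with $\mathbb{R}\cdot1$. For $a=a_0+a_1e_1+a_2e_2+a_3e_3$: $G(a)=a_1^2+a_2^2-a_3^2$, $H_a=a_0^2-a_1^2-a_2^2+a_3^2$; $Z(C\ell_2)=\{a:H_a=0\}$, and elements outside $Z(C\ell_2)$ are invertible. *)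

theory Defs
  imports Complex_Main
begin

text \<open>The Clifford algebra Cl_2 with basis 1, e1, e2, e3 and
 e1^2 = e2^2 = 1, e3^2 = -1, e1 e2 = e3 = - e2 e1, e1 e3 = e2 = - e3 e1,
 e3 e2 = e1 = - e2 e3.\<close>

datatype cl2 = Cl2 (c0: real) (c1: real) (c2: real) (c3: real)

instantiation cl2 :: ring_1
begin
definition "0 = Cl2 0 0 0 0"
definition "1 = Cl2 1 0 0 0"
definition "a + b = Cl2 (c0 a + c0 b) (c1 a + c1 b) (c2 a + c2 b) (c3 a + c3 b)"
definition "a - b = Cl2 (c0 a - c0 b) (c1 a - c1 b) (c2 a - c2 b) (c3 a - c3 b)"
definition "- a = Cl2 (- c0 a) (- c1 a) (- c2 a) (- c3 a)"
definition "a * b = Cl2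
   (c0 a * c0 b + c1 a * c1 b + c2 a * c2 b - c3 a * c3 b)
   (c0 a * c1 b + c1 a * c0 b - c2 a * c3 b + c3 a * c2 b)
   (c0 a * c2 b + c2 a * c0 b + c1 a * c3 b - c3 a * c1 b)
   (c0 a * c3 b + c3 a * c0 b + c1 a * c2 b - c2 a * c1 b)"
instance
  by standard (auto simp: zero_cl2_def one_cl2_def plus_cl2_def minus_cl2_def
      uminus_cl2_def times_cl2_def cl2.expand algebra_simps)
end

definition e1 :: cl2 where "e1 = Cl2 0 1 0 0"
definition e2 :: cl2 where "e2 = Cl2 0 0 1 0"
definition e3 :: cl2 where "e3 = Cl2 0 0 0 1"

definition scal :: "real \<Rightarrow> cl2" where "scal r = Cl2 r 0 0 0"

definition G :: "cl2 \<Rightarrow> real" where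
  "G a = (c1 a)^2 + (c2 a)^2 - (c3 a)^2"

definition H :: "cl2 \<Rightarrow> real" where
  "H a = (c0 a)^2 - (c1 a)^2 - (c2 a)^2 + (c3 a)^2"

definition Zcl2 :: "cl2 set" where "Zcl2 = {a. H a = 0}"

definition inv_cl2 :: "cl2 \<Rightarrow> cl2" where
  "inv_cl2 u = (THE v. u * v = 1 \<and> v * u = 1)"

lemma cl2_basis_sanity:
  "e1 * e1 = 1" "e2 * e2 = 1" "e3 * e3 = - 1" "e1 * e2 = e3" "e2 * e1 = - e3"
  "e1 * e3 = e2" "e3 * e1 = - e2" "e3 * e2 = e1" "e2 * e3 = - e1"
  "Cl2 x0 x1 x2 x3 = scal x0 + scal x1 * e1 + scal x2 * e2 + scal x3 * e3"
  by (simp_all add: e1_def e2_def e3_def scal_def times_cl2_def one_cl2_def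
      uminus_cl2_def plus_cl2_def)

end

theory Submission
  imports Defs
begin

text \<open>
  Write \<open>a = a\<^sub>0 + v\<close> with \<open>v\<close> pure (no scalar part); the right-hand side is
  \<open>a\<^sub>0 + w\<close> with \<open>w\<close> pure, and \<open>v\<^sup>2 = G(a) = w\<^sup>2\<close> is a real, hence central.
  Then every \<open>u = v x + x w\<close> satisfies \<open>v u = v\<^sup>2 x + v x w = u w\<close>, so it remains
  to choose \<open>x \<in> {1, e\<^sub>1, e\<^sub>2, e\<^sub>3}\<close> with \<open>H(u) \<noteq> 0\<close>. Suitable signed sums of the
  four values of \<open>H(u)\<close> equal \<open>8 v\<^sub>3 w\<^sub>3\<close> and \<open>4 (G v + G w)\<close>, and a nonzero pure
  element with \<open>G = 0\<close> has a nonzero \<open>e\<^sub>3\<close>-coordinate; so if all four vanished,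
  \<open>v\<close> or \<open>w\<close> would be \<open>0\<close>.
\<close>

lemma intertwiner_of_equal_squares:
  fixes v w x :: "'a::ring"
  assumes "v * v = w * w" "v * v * x = x * (v * v)"
  shows "v * (v * x + x * w) = (v * x + x * w) * w"
proof -
  have "v * (v * x + x * w) = v * v * x + v * x * w"
    by (simp add: distrib_left mult.assoc)
  also have "\<dots> = x * (w * w) + v * x * w"
    using assms by simp
  also have "\<dots> = (v * x + x * w) * w"
    by (simp add: distrib_right mult.assoc add.commute)
  finally show ?thesis .
qed

definition pure_cl2 :: "cl2 \<Rightarrow> bool" where
  "pure_cl2 v \<longleftrightarrow> c0 v = 0"

definition cnj_cl2 :: "cl2 \<Rightarrow> cl2" where
  "cnj_cl2 u = Cl2 (c0 u) (- c1 u) (- c2 u) (- c3 u)"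

lemma scal_mult_scal: "scal r * scal s = scal (r * s)"
  by (simp add: scal_def times_cl2_def)

lemma scal_one: "scal 1 = 1"
  by (simp add: scal_def one_cl2_def)

lemma scal_mult_commute: "scal r * x = x * scal r"
  by (simp add: scal_def times_cl2_def)

lemma mult_cnj_cl2: "u * cnj_cl2 u = scal (H u)"
  by (simp add: cnj_cl2_def scal_def H_def times_cl2_def power2_eq_square)

lemma cnj_cl2_mult: "cnj_cl2 u * u = scal (H u)"
  by (simp add: cnj_cl2_def scal_def H_def times_cl2_def power2_eq_square)

lemma inv_cl2_unique:
  assumes "u * v = 1" "v * u = 1"
  shows "inv_cl2 u = v"
  unfolding inv_cl2_def
proof (rule the_equality)
  fix v' assume "u * v' = 1 \<and> v' * u = 1"
  then have "v' = (v * u) * v'" using assms by simp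
  also have "\<dots> = v" using \<open>u * v' = 1 \<and> v' * u = 1\<close> by (simp add: mult.assoc)
  finally show "v' = v" .
qed (use assms in simp)

lemma inv_cl2_eq:
  assumes "H u \<noteq> 0"
  shows "inv_cl2 u = scal (inverse (H u)) * cnj_cl2 u"
proof (rule inv_cl2_unique)
  show "u * (scal (inverse (H u)) * cnj_cl2 u) = 1"
    by (metis assms mult.assoc mult_cnj_cl2 scal_mult_commute scal_mult_scal scal_one
        left_inverse)
  show "scal (inverse (H u)) * cnj_cl2 u * u = 1"
    by (metis assms mult.assoc cnj_cl2_mult scal_mult_scal scal_one left_inverse)
qed

lemma inv_cl2_conjugate:
  assumes "H u \<noteq> 0" "a * u = u * b"
  shows "inv_cl2 u * a * u = b"
proof -
  have "inv_cl2 u * a * u = scal (inverse (H u)) * (cnj_cl2 u * u) * b"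
    by (simp add: inv_cl2_eq[OF assms(1)] assms(2) mult.assoc)
  also have "\<dots> = b"
    using assms(1) by (simp add: cnj_cl2_mult scal_mult_scal scal_one)
  finally show ?thesis .
qed

lemma pure_cl2_square: "pure_cl2 v \<Longrightarrow> v * v = scal (G v)"
  by (cases v) (simp add: pure_cl2_def scal_def G_def times_cl2_def power2_eq_square)

lemma c3_nonzero_if_null_pure_cl2:
  assumes "pure_cl2 v" "G v = 0" "v \<noteq> 0"
  shows "c3 v \<noteq> 0"
  using assms by (cases v) (auto simp: pure_cl2_def G_def zero_cl2_def)

lemma pure_cl2_intertwiner_invertible:
  assumes "pure_cl2 v" "pure_cl2 w" "G v = G w" "v \<noteq> 0" "w \<noteq> 0"
  shows "\<exists>x \<in> {1, e1, e2, e3}. H (v * x + x * w) \<noteq> 0"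
proof (rule ccontr)
  assume "\<not> ?thesis"
  then have H_0: "H (v + w) = 0" "H (v * e1 + e1 * w) = 0"
    "H (v * e2 + e2 * w) = 0" "H (v * e3 + e3 * w) = 0"
    by auto
  have "H (v + w) + H (v * e1 + e1 * w) + H (v * e2 + e2 * w) + H (v * e3 + e3 * w)
      = 8 * c3 v * c3 w"
    "H (v * e1 + e1 * w) + H (v * e2 + e2 * w) - H (v + w) - H (v * e3 + e3 * w)
      = 4 * (G v + G w)"
    using assms(1,2)
    by (cases v, cases w, simp add: pure_cl2_def H_def G_def e1_def e2_def e3_def
        times_cl2_def plus_cl2_def power2_eq_square algebra_simps)+
  then have "c3 v = 0 \<or> c3 w = 0" "G v = 0" "G w = 0"
    using H_0 assms(3) by simp_all
  then show False
    using assms c3_nonzero_if_null_pure_cl2 by metis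
qed

lemma pure_cl2_conjugate:
  assumes "pure_cl2 v" "pure_cl2 w" "G v = G w" "v \<noteq> 0" "w \<noteq> 0"
  shows "\<exists>u. H u \<noteq> 0 \<and> v * u = u * w"
proof -
  obtain x where "H (v * x + x * w) \<noteq> 0"
    using pure_cl2_intertwiner_invertible[OF assms] by blast
  moreover have "v * (v * x + x * w) = (v * x + x * w) * w"
    by (rule intertwiner_of_equal_squares)
      (simp_all add: assms pure_cl2_square scal_mult_commute)
  ultimately show ?thesis by blast
qed

definition standard_pure_cl2 :: "real \<Rightarrow> cl2" where
  "standard_pure_cl2 g =
    (if g > 0 then scal (sqrt g) * e2
     else if g < 0 then scal (sqrt (- g)) * e3
     else e2 + e3)"

lemma standard_pure_cl2:
  "pure_cl2 (standard_pure_cl2 g)" "standard_pure_cl2 g \<noteq> 0" "G (standard_pure_cl2 g) = g"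
  by (simp_all add: standard_pure_cl2_def pure_cl2_def G_def scal_def e2_def e3_def
      times_cl2_def plus_cl2_def zero_cl2_def)

theorem lemma5p3:
  fixes a :: cl2
  assumes "a \<notin> range scal"
  shows "\<exists>u. u \<notin> Zcl2 \<and>
    inv_cl2 u * a * u =
      (if G a > 0 then scal (c0 a) + scal (sqrt (G a)) * e2
       else if G a < 0 then scal (c0 a) + scal (sqrt (- G a)) * e3
       else scal (c0 a) + e2 + e3)"
proof -
  define v where "v = a - scal (c0 a)"
  define w where "w = standard_pure_cl2 (G a)"
  have a: "a = scal (c0 a) + v"
    by (simp add: v_def)
  have "pure_cl2 v" "G v = G a" "v \<noteq> 0"
    using assms by (cases a; auto simp: v_def pure_cl2_def G_def scal_def minus_cl2_def
        zero_cl2_def)+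
  then obtain u where u: "H u \<noteq> 0" "v * u = u * w"
    using pure_cl2_conjugate standard_pure_cl2 unfolding w_def by metis
  have "a * u = u * (scal (c0 a) + w)"
    by (subst a) (simp add: distrib_left distrib_right u(2) scal_mult_commute)
  then have "inv_cl2 u * a * u = scal (c0 a) + w"
    by (rule inv_cl2_conjugate[OF u(1)])
  moreover have "u \<notin> Zcl2"
    using u(1) by (simp add: Zcl2_def)
  ultimately show ?thesis
    by (auto simp: w_def standard_pure_cl2_def add.assoc)
qed

end
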